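(* Let $(A,+)$ be a subsemigroup of the additive semigroup $(\mathbb{R},+)$ such that $0\in A\ne\{0\}$. For every finite set $S=\{0=s_0<s_1<\dots<s_k\}\subseteq A$ there exists a finite tight set $T=\{0=t_0<t_1<\dots<t_\ell\}\subseteq A$ such that $S\subseteq T$, $t_1=s_1$ and $t_\ell=s_k$.
   Context: A finite set $T=\{0=t_0<t_1<\dots<t_\ell\}\subseteq\mathbb{R}$ of nonnegative reals is tight if $t_{i+j}\le t_i+t_j$ for all $i,j$ with $0\le i\le j\le i+j\le\ell$. *)

theory Defs
  imports Main Complex_Main
begin

definition tight :: "real set \<Rightarrow> bool" where
  "tight T \<longleftrightarrow> finite T \<and> 0 \<in> T \<and> (\<forall>t\<in>T. 0 \<le> t) \<and>
     (\<forall>i j. i \<le> j \<and> i + j < card T \<longrightarrow>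
        sorted_list_of_set T ! (i + j) \<le> sorted_list_of_set T ! i + sorted_list_of_set T ! j)"

end

theory Submission
  imports Defs
begin

text \<open>Take for T all finite sums of elements of S that do not exceed max S. Such a T lies in A,
  is finite because every nonzero summand is at least the smallest positive element s_1 of S,
  and its second smallest element is still s_1. Tightness comes from closure under sums below
  the maximum: if t_i + t_j < t_(i+j), then t_0, ..., t_(i-1) together with t_i + t_0, ...,
  t_i + t_j would be i + j + 1 elements of T below t_(i+j), which is impossible.\<close>

inductive_set sums_of :: "'a::monoid_add set \<Rightarrow> 'a set" for S where
  zero: "0 \<in> sums_of S"
| add: "x \<in> sums_of S \<Longrightarrow> s \<in> S \<Longrightarrow> x + s \<in> sums_of S"

lemma subset_sums_of: "S \<subseteq> sums_of S"
  using sums_of.add[OF sums_of.zero] by fastforce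

lemma sums_of_add:
  assumes "x \<in> sums_of S" "y \<in> sums_of S"
  shows "x + y \<in> sums_of S"
  using assms(2)
proof induction
  case zero
  then show ?case using assms(1) by simp
next
  case (add y s)
  then show ?case by (metis add.assoc sums_of.add)
qed

lemma sums_of_subset:
  assumes "\<And>x y. x \<in> A \<Longrightarrow> y \<in> A \<Longrightarrow> x + y \<in> A" "0 \<in> A" "S \<subseteq> A"
  shows "sums_of S \<subseteq> A"
proof
  show "x \<in> A" if "x \<in> sums_of S" for x
    using that by induction (use assms in auto)
qed

lemma sums_of_nonzero_decompose:
  assumes "x \<in> sums_of S" "x \<noteq> 0"
  shows "\<exists>y\<in>sums_of S. \<exists>s\<in>S - {0}. x = y + s"
  using assms by induction (metis Diff_iff add_0_right singletonD sums_of.add sums_of.zero)+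

lemma sums_of_zero_or_ge:
  fixes c :: real
  assumes "0 < c" "\<forall>s\<in>S. s = 0 \<or> c \<le> s" "x \<in> sums_of S"
  shows "x = 0 \<or> c \<le> x"
  using assms(3) by induction (use assms(1,2) in fastforce)+

lemma finite_sums_of_le:
  fixes c :: real
  assumes "finite S" "0 < c" "\<forall>s\<in>S. s = 0 \<or> c \<le> s"
  shows "finite {x \<in> sums_of S. x \<le> m}"
proof -
  have "finite {x \<in> sums_of S. x \<le> m}" if "m < real n * c" for n m
    using that
  proof (induction n arbitrary: m)
    case 0
    then have "{x \<in> sums_of S. x \<le> m} = {}"
      using sums_of_zero_or_ge[OF assms(2,3)] assms(2) by fastforce
    then show ?case by (metis finite.emptyI)
  next
    case (Suc n)
    have "{x \<in> sums_of S. x \<le> m} \<subseteq>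
        {0} \<union> (\<Union>s\<in>S - {0}. (\<lambda>y. y + s) ` {y \<in> sums_of S. y \<le> m - s})"
      by (force dest: sums_of_nonzero_decompose)
    moreover have "finite {y \<in> sums_of S. y \<le> m - s}" if "s \<in> S - {0}" for s
      using that assms(3) Suc by (intro Suc.IH) (auto simp: algebra_simps)
    ultimately show ?case using assms(1) by (auto intro: finite_subset)
  qed
  then show ?thesis using ex_less_of_nat_mult[OF assms(2)] by blast
qed

lemma sorted_list_of_set_nth_le:
  fixes T :: "'a::linorder set"
  assumes "finite T" "n < card {t \<in> T. t \<le> v}"
  shows "sorted_list_of_set T ! n \<le> v"
proof (rule ccontr)
  let ?L = "sorted_list_of_set T"
  assume gt: "\<not> ?L ! n \<le> v"
  have "{t \<in> T. t \<le> v} \<subseteq> set (take n ?L)"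
  proof
    fix t assume t: "t \<in> {t \<in> T. t \<le> v}"
    then obtain k where k: "k < length ?L" "t = ?L ! k"
      using assms(1) in_set_conv_nth[of t ?L] by auto
    have "k < n"
      using gt t k sorted_nth_mono[OF sorted_sorted_list_of_set, of n k] by force
    then show "t \<in> set (take n ?L)" using k by (auto simp: in_set_conv_nth)
  qed
  then have "card {t \<in> T. t \<le> v} \<le> card (set (take n ?L))"
    by (intro card_mono) auto
  also have "\<dots> \<le> n"
    using card_length[of "take n ?L"] by simp
  finally show False using assms(2) by simp
qed

lemma tight_if_closed_below:
  fixes T :: "real set"
  assumes fin: "finite T" and T0: "0 \<in> T" and nonneg: "\<forall>t\<in>T. 0 \<le> t"
    and bound: "\<forall>t\<in>T. t \<le> m"
    and closed: "\<And>x y. x \<in> T \<Longrightarrow> y \<in> T \<Longrightarrow> x + y \<le> m \<Longrightarrow> x + y \<in> T"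
  shows "tight T"
  unfolding tight_def
proof (intro conjI fin T0 nonneg allI impI)
  fix i j assume ij: "i \<le> j \<and> i + j < card T"
  let ?L = "sorted_list_of_set T"
  let ?v = "?L ! i + ?L ! j"
  have in_T: "?L ! k \<in> T" if "k < card T" for k
    using that fin nth_mem[of k ?L] by simp
  have less: "?L ! k < ?L ! l" if "k < l" "l < card T" for k l
    using that sorted_wrt_nth_less[OF strict_sorted_list_of_set] by simp
  have mono: "?L ! k \<le> ?L ! l" if "k \<le> l" "l < card T" for k l
    using that less by (cases "k = l") (auto intro: less_imp_le)
  have nonneg_nth: "0 \<le> ?L ! k" if "k < card T" for k
    using that in_T nonneg by blast
  show "?L ! (i + j) \<le> ?v"
  proof (cases "m \<le> ?v")
    case True
    then show ?thesis using bound in_T ij by fastforce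
  next
    case False
    define low where "low = nth ?L ` {..<i}"
    define high where "high = (\<lambda>k. ?L ! i + ?L ! k) ` {..j}"
    have "card low = i"
      unfolding low_def using ij by (subst card_image) (auto intro: inj_on_nth)
    moreover have "card high = j + 1"
      unfolding high_def using ij
      by (subst card_image) (auto simp: inj_on_def nth_eq_iff_index_eq)
    moreover have "low \<inter> high = {}"
    proof -
      have "x < ?L ! i" if "x \<in> low" for x
        using that ij less unfolding low_def by auto
      moreover have "?L ! i \<le> x" if "x \<in> high" for x
        using that ij nonneg_nth unfolding high_def by auto
      ultimately show ?thesis by fastforce
    qed
    moreover have "low \<subseteq> {t \<in> T. t \<le> ?v}"
      using ij in_T mono nonneg_nth unfolding low_def by (auto intro: add_increasing2)
    moreover have "high \<subseteq> {t \<in> T. t \<le> ?v}"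
    proof
      fix x assume "x \<in> high"
      then obtain k where k: "k \<le> j" "x = ?L ! i + ?L ! k"
        unfolding high_def by blast
      then have "x \<le> ?v" using mono ij by simp
      then show "x \<in> {t \<in> T. t \<le> ?v}" using k ij in_T False closed by simp
    qed
    ultimately have "i + j < card {t \<in> T. t \<le> ?v}"
      using card_mono[of "{t \<in> T. t \<le> ?v}" "low \<union> high"] fin
      by (simp add: card_Un_disjoint low_def high_def)
    then show ?thesis by (rule sorted_list_of_set_nth_le[OF fin])
  qed
qed

lemma tight_sums_of_le:
  fixes S :: "real set"
  assumes "finite S" "0 < c" "\<forall>s\<in>S. s = 0 \<or> c \<le> s" "0 \<le> m"
  shows "tight {x \<in> sums_of S. x \<le> m}"
  using finite_sums_of_le[OF assms(1-3)] sums_of.zero sums_of_add assms(2,4)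
    sums_of_zero_or_ge[OF assms(2,3)]
  by (intro tight_if_closed_below[where m = m]) fastforce+

lemma sorted_list_of_set_nth_1:
  fixes X :: "'a::linorder set"
  assumes "finite X" "x \<in> X" "\<forall>y\<in>X. x \<le> y" "X - {x} \<noteq> {}"
  shows "sorted_list_of_set X ! 1 = Min (X - {x})"
proof -
  have "Min X = x" using assms(1-3) by (intro Min_eqI) auto
  then have "sorted_list_of_set X = x # sorted_list_of_set (X - {x})"
    using sorted_list_of_set_nonempty[OF assms(1)] assms(2) by auto
  moreover have "sorted_list_of_set (X - {x}) =
      Min (X - {x}) # sorted_list_of_set (X - {x} - {Min (X - {x})})"
    using sorted_list_of_set_nonempty[of "X - {x}"] assms(1,4) by auto
  ultimately show ?thesis by simp
qed

theorem lemma4p3: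
  fixes A S :: "real set"
  assumes A_add: "\<And>x y. x \<in> A \<Longrightarrow> y \<in> A \<Longrightarrow> x + y \<in> A"
    and A0: "0 \<in> A"
    and A_nontriv: "A \<noteq> {0}"
    and S_fin: "finite S"
    and S_sub: "S \<subseteq> A"
    and S0: "0 \<in> S"
    and S_nonneg: "\<forall>s\<in>S. 0 \<le> s"
    and S_card: "card S \<ge> 2"
  shows "\<exists>T. tight T \<and> T \<subseteq> A \<and> S \<subseteq> T \<and>
           sorted_list_of_set T ! 1 = sorted_list_of_set S ! 1 \<and>
           Max T = Max S"
proof -
  have S_pos: "S - {0} \<noteq> {}"
  proof
    assume "S - {0} = {}"
    then have "card S \<le> card {0 :: real}" by (intro card_mono) auto
    then show False using S_card by simp
  qed
  define c where "c = Min (S - {0})"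
  have c_in: "c \<in> S - {0}"
    unfolding c_def using S_fin S_pos by (intro Min_in) auto
  have c_le: "\<forall>s\<in>S. s = 0 \<or> c \<le> s"
    unfolding c_def using S_fin by (auto intro: Min_le)
  have c_pos: "0 < c" using c_in S_nonneg by force
  define T where "T = {x \<in> sums_of S. x \<le> Max S}"
  have T_fin: "finite T"
    unfolding T_def using finite_sums_of_le[OF S_fin c_pos c_le] .
  have S_T: "S \<subseteq> T" unfolding T_def using subset_sums_of S_fin by fastforce
  have T_nonneg: "\<forall>t\<in>T. 0 \<le> t" and T_c: "\<forall>t\<in>T - {0}. c \<le> t"
    unfolding T_def using sums_of_zero_or_ge[OF c_pos c_le] c_pos by fastforce+
  have "tight T"
    unfolding T_def using S_fin c_pos c_le S0 Max_ge[OF S_fin] by (intro tight_sums_of_le) auto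
  moreover have "T \<subseteq> A" unfolding T_def using sums_of_subset[OF A_add A0 S_sub] by blast
  moreover have "sorted_list_of_set T ! 1 = c"
  proof -
    have "sorted_list_of_set T ! 1 = Min (T - {0})"
      using T_fin S0 S_T T_nonneg c_in by (intro sorted_list_of_set_nth_1) auto
    also have "\<dots> = c" using T_fin c_in S_T T_c by (intro Min_eqI) auto
    finally show ?thesis .
  qed
  moreover have "sorted_list_of_set S ! 1 = c"
    unfolding c_def using S_fin S0 S_nonneg S_pos by (rule sorted_list_of_set_nth_1)
  moreover have "Max T = Max S"
    using T_fin S_T Max_in[OF S_fin] S0 by (intro Max_eqI) (auto simp: T_def)
  ultimately show ?thesis using S_T by auto
qed

end
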